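(* Let $k\ge1$ and $n_1,\dots,n_k\in\mathbb{Z}$. The word problem for \[ G=\left\langle a,t,b_1,\dots,b_k \;\middle|\; at=ta,\; b_1^{-1}tb_1=a^{n_1}t,\;\dots,\; b_k^{-1}tb_k=a^{n_k}t\right\rangle \] is solvable. *)

theory Defs
  imports Main "HOL-Library.Nat_Bijection"
begin

datatype recf = Z | S | Id nat | Cn recf "recf list" | Pr recf recf | Mn recf

text \<open>Big-step (deterministic) evaluation of mu-recursive function codes;
  argument lists are untyped (arity is not checked), undefined cases simply
  have no evaluation.\<close>
inductive eval :: "recf \<Rightarrow> nat list \<Rightarrow> nat \<Rightarrow> bool" where
  eval_Z: "eval Z xs 0"
| eval_S: "eval S (x # xs) (Suc x)"
| eval_Id: "i < length xs \<Longrightarrow> eval (Id i) xs (xs ! i)"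
| eval_Cn: "list_all2 (\<lambda>g y. eval g xs y) gs ys \<Longrightarrow> eval f ys z \<Longrightarrow> eval (Cn f gs) xs z"
| eval_Pr0: "eval g xs y \<Longrightarrow> eval (Pr g h) (0 # xs) y"
| eval_PrS: "eval (Pr g h) (n # xs) y \<Longrightarrow> eval h (n # y # xs) z \<Longrightarrow> eval (Pr g h) (Suc n # xs) z"
| eval_Mn: "eval f (y # xs) 0 \<Longrightarrow> (\<forall>m<y. \<exists>z. 0 < z \<and> eval f (m # xs) z) \<Longrightarrow> eval (Mn f) xs y"

definition decidable_set :: "nat set \<Rightarrow> bool" where
  "decidable_set P \<longleftrightarrow> (\<exists>f. \<forall>x. eval f [x] (if x \<in> P then 1 else 0))"

text \<open>A letter (g, False) is generator g, (g, True) is its inverse.\<close>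
type_synonym letter = "nat \<times> bool"
type_synonym word = "letter list"

definition inv_letter :: "letter \<Rightarrow> letter" where
  "inv_letter x = (fst x, \<not> snd x)"

inductive pres_eq :: "word set \<Rightarrow> word \<Rightarrow> word \<Rightarrow> bool" for R where
  pe_refl: "pres_eq R w w"
| pe_sym: "pres_eq R u v \<Longrightarrow> pres_eq R v u"
| pe_trans: "pres_eq R u v \<Longrightarrow> pres_eq R v w \<Longrightarrow> pres_eq R u w"
| pe_cancel: "pres_eq R (u @ [x, inv_letter x] @ v) (u @ v)"
| pe_rel: "r \<in> R \<Longrightarrow> pres_eq R (u @ r @ v) (u @ v)"

definition encode_word :: "word \<Rightarrow> nat" where
  "encode_word w = list_encode (map (\<lambda>(g, b). prod_encode (g, if b then 1 else 0)) w)"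

definition word_problem_solvable :: "nat \<Rightarrow> word set \<Rightarrow> bool" where
  "word_problem_solvable m R \<longleftrightarrow>
     decidable_set (encode_word ` {w. (\<forall>x\<in>set w. fst x < m) \<and> pres_eq R w []})"

text \<open>Generators: a = 0, t = 1, b_i = i + 1 for i = 1..k.\<close>
definition apow :: "int \<Rightarrow> word" where
  "apow n = (if 0 \<le> n then replicate (nat n) (0, False) else replicate (nat (- n)) (0, True))"

text \<open>Relators: a t a^-1 t^-1, and b_i^-1 t b_i t^-1 a^(-n_i) for i = 1..k
  (encoding at = ta and b_i^-1 t b_i = a^(n_i) t).\<close>
definition G_relators :: "nat \<Rightarrow> (nat \<Rightarrow> int) \<Rightarrow> word set" where
  "G_relators k n =
     {[(0, False), (1, False), (0, True), (1, True)]} \<union>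
     {[(i + 1, True), (1, False), (i + 1, False), (1, True)] @ apow (- n i) | i. 1 \<le> i \<and> i \<le> k}"

end

theory Submission
  imports Defs
begin

text \<open>
  \<open>G\<close> is an HNN extension of the free abelian group \<open>\<langle>a, t\<rangle>\<close> whose stable letters \<open>b\<^sub>i\<close>
  conjugate \<open>t\<close> to \<open>a\<^bsup>n\<^sub>i\<^esup>t\<close>. Every word equals a word
  \<open>a\<^bsup>x\<^sub>1\<^esup>s\<^sub>1 \<dots> a\<^bsup>x\<^sub>m\<^esup>s\<^sub>m a\<^sup>p t\<^sup>q\<close> with stable letters or their inverses \<open>s\<^sub>j\<close>
  and no factor \<open>s a\<^sup>0 s\<^sup>-\<^sup>1\<close>, recorded as a state \<open>(L, p, q)\<close>. Right multiplication
  by a letter acts on states, moving stable letters past \<open>t\<^sup>q\<close> by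
  \<open>t\<^sup>q b\<^sub>i = b\<^sub>i a\<^bsup>n\<^sub>i q\<^esup> t\<^sup>q\<close>. This action respects the relators, so a word equal to 1
  fixes the empty state; conversely the state reached from the empty state represents the
  word, so a word fixing the empty state equals 1. The action is arithmetic on codes of
  states, so running it along the decoded input is a mu-recursive function.
\<close>

section \<open>Computable functions\<close>

definition computable :: "nat \<Rightarrow> (nat list \<Rightarrow> nat) \<Rightarrow> bool" where
  "computable n f \<longleftrightarrow> (\<exists>c. \<forall>xs. length xs = n \<longrightarrow> eval c xs (f xs))"

definition computable_pred :: "nat \<Rightarrow> (nat list \<Rightarrow> bool) \<Rightarrow> bool" where
  "computable_pred n P \<longleftrightarrow> computable n (\<lambda>xs. if P xs then 1 else 0)"

lemma computable_cong:
  assumes "computable n f" and "\<And>xs. length xs = n \<Longrightarrow> f xs = g xs"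
  shows "computable n g"
  using assms unfolding computable_def by metis

lemma computable_proj: "i < n \<Longrightarrow> computable n (\<lambda>xs. xs ! i)"
  unfolding computable_def by (auto intro: exI[of _ "Id i"] eval_Id)

lemma computable_hd: "computable 1 hd"
  by (rule computable_cong[OF computable_proj[of 0]]) (auto simp: length_Suc_conv)

lemma computable_zero: "computable n (\<lambda>xs. 0)"
  unfolding computable_def by (auto intro: exI[of _ Z] eval_Z)

lemma computable_comp:
  assumes h: "computable (length fs) h" and fs: "\<forall>f\<in>set fs. computable n f"
  shows "computable n (\<lambda>xs. h (map (\<lambda>f. f xs) fs))"
proof -
  obtain ch where ch: "\<And>ys. length ys = length fs \<Longrightarrow> eval ch ys (h ys)"
    using h unfolding computable_def by blast
  obtain C where C: "\<And>f xs. f \<in> set fs \<Longrightarrow> length xs = n \<Longrightarrow> eval (C f) xs (f xs)"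
    using fs unfolding computable_def by metis
  have "eval (Cn ch (map C fs)) xs (h (map (\<lambda>f. f xs) fs))" if "length xs = n" for xs
    using that by (intro eval_Cn[where ys="map (\<lambda>f. f xs) fs"] ch)
      (auto simp: list_all2_map1 list_all2_map2 list.rel_refl_strong C)
  then show ?thesis unfolding computable_def by blast
qed

lemma computable_comp1: "computable 1 h \<Longrightarrow> computable n f \<Longrightarrow> computable n (\<lambda>xs. h [f xs])"
  using computable_comp[where fs="[f]"] by simp

lemma computable_comp2:
  "computable 2 h \<Longrightarrow> computable n f \<Longrightarrow> computable n g \<Longrightarrow> computable n (\<lambda>xs. h [f xs, g xs])"
  using computable_comp[where fs="[f, g]"] by (simp add: numeral_2_eq_2)

lemma computable_unary:
  "computable 1 (\<lambda>xs. h (hd xs)) \<Longrightarrow> computable n f \<Longrightarrow> computable n (\<lambda>xs. h (f xs))"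
  using computable_comp1[of "\<lambda>xs. h (hd xs)"] by simp

lemma computable_binary:
  "computable 2 (\<lambda>xs. h (xs ! 0) (xs ! 1)) \<Longrightarrow> computable n f \<Longrightarrow> computable n g \<Longrightarrow>
   computable n (\<lambda>xs. h (f xs) (g xs))"
  using computable_comp2[of "\<lambda>xs. h (xs ! 0) (xs ! 1)"] by simp

lemma computable_Suc: "computable n f \<Longrightarrow> computable n (\<lambda>xs. Suc (f xs))"
proof (rule computable_unary[of Suc])
  show "computable 1 (\<lambda>xs. Suc (hd xs))"
    unfolding computable_def by (rule exI[of _ S]) (auto simp: length_Suc_conv intro: eval_S)
qed

lemma computable_const: "computable n (\<lambda>xs. c)"
  by (induction c) (auto intro: computable_zero computable_Suc)

lemma computable_rec_nat:
  assumes g: "computable n g" and h: "computable (Suc (Suc n)) h"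
  shows "computable (Suc n) (\<lambda>xs. rec_nat (g (tl xs)) (\<lambda>m y. h (m # y # tl xs)) (hd xs))"
proof -
  obtain cg ch where cg: "\<And>ys. length ys = n \<Longrightarrow> eval cg ys (g ys)"
    and ch: "\<And>ys. length ys = Suc (Suc n) \<Longrightarrow> eval ch ys (h ys)"
    using g h unfolding computable_def by blast
  have "eval (Pr cg ch) (m # ys) (rec_nat (g ys) (\<lambda>m y. h (m # y # ys)) m)" if "length ys = n" for m ys
    using that by (induction m) (auto intro: eval_Pr0 eval_PrS[OF _ ch] cg)
  then show ?thesis unfolding computable_def
    by (intro exI[of _ "Pr cg ch"]) (auto simp: length_Suc_conv)
qed

lemma computable_LEAST:
  assumes f: "computable (Suc n) f" and ex: "\<And>ys. length ys = n \<Longrightarrow> \<exists>y. f (y # ys) = 0"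
  shows "computable n (\<lambda>ys. LEAST y. f (y # ys) = 0)"
proof -
  obtain c where c: "\<And>xs. length xs = Suc n \<Longrightarrow> eval c xs (f xs)"
    using f unfolding computable_def by blast
  have "eval (Mn c) ys (LEAST y. f (y # ys) = 0)" if "length ys = n" for ys
  proof (rule eval_Mn)
    show "eval c ((LEAST y. f (y # ys) = 0) # ys) 0"
      using c[of "_ # ys"] LeastI_ex[OF ex[OF that]] that by (metis length_Cons)
    show "\<forall>m<(LEAST y. f (y # ys) = 0). \<exists>z>0. eval c (m # ys) z"
      using c[of "_ # ys"] not_less_Least that by fastforce
  qed
  then show ?thesis unfolding computable_def by blast
qed

lemma computable_funpow:
  assumes "computable 1 (\<lambda>xs. s (hd xs))" and "computable 1 (\<lambda>xs. x0 (hd xs))"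
  shows "computable 1 (\<lambda>xs. (s ^^ hd xs) (x0 (hd xs)))"
proof -
  have "computable 2 (\<lambda>xs. rec_nat (x0 (hd (tl xs))) (\<lambda>m y. s y) (hd xs))"
    using computable_rec_nat[of 1 "\<lambda>ys. x0 (hd ys)" "\<lambda>ys. s (ys ! 1)"] assms
      computable_unary[OF assms(1) computable_proj[of 1]] by (simp add: numeral_2_eq_2)
  moreover have "rec_nat y (\<lambda>m. s) m = (s ^^ m) y" for y m
    by (induction m) auto
  ultimately have "computable 2 (\<lambda>xs. (s ^^ (xs ! 0)) (x0 (xs ! 1)))"
    by (elim computable_cong) (auto simp: length_Suc_conv numeral_2_eq_2 hd_conv_nth)
  from computable_binary[OF this computable_hd computable_hd] show ?thesis .
qed

lemma computable_add: "computable n f \<Longrightarrow> computable n g \<Longrightarrow> computable n (\<lambda>xs. f xs + g xs)"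
proof -
  have "computable 2 (\<lambda>xs. rec_nat (tl xs ! 0) (\<lambda>m y. Suc y) (hd xs))"
    using computable_rec_nat[of 1 "\<lambda>ys. ys ! 0" "\<lambda>ys. Suc (ys ! 1)"]
    by (simp add: numeral_2_eq_2 computable_proj computable_Suc)
  moreover have "rec_nat x (\<lambda>m. Suc) m = m + x" for x m
    by (induction m) auto
  ultimately have "computable 2 (\<lambda>xs. xs ! 0 + xs ! 1)"
    by (elim computable_cong) (auto simp: length_Suc_conv numeral_2_eq_2)
  then show "computable n f \<Longrightarrow> computable n g \<Longrightarrow> computable n (\<lambda>xs. f xs + g xs)"
    using computable_binary[of "(+)"] by simp
qed

lemma computable_mult: "computable n f \<Longrightarrow> computable n g \<Longrightarrow> computable n (\<lambda>xs. f xs * g xs)"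
proof -
  have "computable 3 (\<lambda>ys. ys ! 1 + ys ! 2)"
    by (intro computable_add computable_proj) auto
  then have "computable 2 (\<lambda>xs. rec_nat 0 (\<lambda>m y. y + tl xs ! 0) (hd xs))"
    using computable_rec_nat[of 1 "\<lambda>ys. 0" "\<lambda>ys. ys ! 1 + ys ! 2"]
    by (simp add: numeral_2_eq_2 numeral_3_eq_3 computable_const)
  moreover have "rec_nat 0 (\<lambda>m y. y + x) m = m * x" for x m
    by (induction m) auto
  ultimately have "computable 2 (\<lambda>xs. xs ! 0 * xs ! 1)"
    by (elim computable_cong) (auto simp: length_Suc_conv numeral_2_eq_2)
  then show "computable n f \<Longrightarrow> computable n g \<Longrightarrow> computable n (\<lambda>xs. f xs * g xs)"
    using computable_binary[of "(*)"] by simp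
qed

lemma computable_diff: "computable n f \<Longrightarrow> computable n g \<Longrightarrow> computable n (\<lambda>xs. f xs - g xs)"
proof -
  have "computable 1 (\<lambda>xs. rec_nat 0 (\<lambda>m y. m) (hd xs))"
    using computable_rec_nat[of 0 "\<lambda>ys. 0" "\<lambda>ys. ys ! 0"] by (simp add: computable_proj computable_const)
  moreover have "rec_nat 0 (\<lambda>m y. m) x = x - 1" for x
    by (cases x) auto
  ultimately have "computable 1 (\<lambda>xs. hd xs - 1)"
    by (elim computable_cong) simp
  then have "computable 3 (\<lambda>ys. ys ! 1 - 1)"
    using computable_unary[of "\<lambda>x. x - 1" 3 "\<lambda>ys. ys ! 1"] computable_proj by simp
  then have "computable 2 (\<lambda>xs. rec_nat (tl xs ! 0) (\<lambda>m y. y - 1) (hd xs))"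
    using computable_rec_nat[of 1 "\<lambda>ys. ys ! 0" "\<lambda>ys. ys ! 1 - 1"]
    by (simp add: numeral_2_eq_2 numeral_3_eq_3 computable_proj)
  moreover have "rec_nat x (\<lambda>m y. y - 1) m = x - m" for x m
    by (induction m) auto
  ultimately have "computable 2 (\<lambda>xs. xs ! 1 - xs ! 0)"
    by (elim computable_cong) (auto simp: length_Suc_conv numeral_2_eq_2)
  then show "computable n f \<Longrightarrow> computable n g \<Longrightarrow> computable n (\<lambda>xs. f xs - g xs)"
    using computable_binary[of "\<lambda>x y. y - x" n g f] by simp
qed

lemma computable_triangle: "computable n f \<Longrightarrow> computable n (\<lambda>xs. triangle (f xs))"
proof -
  have "computable 2 (\<lambda>ys. Suc (ys ! 0) + ys ! 1)"
    by (intro computable_add computable_Suc computable_proj) auto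
  then have "computable 1 (\<lambda>xs. rec_nat 0 (\<lambda>m y. Suc m + y) (hd xs))"
    using computable_rec_nat[of 0 "\<lambda>ys. 0" "\<lambda>ys. Suc (ys ! 0) + ys ! 1"]
    by (simp add: numeral_2_eq_2 computable_const)
  moreover have "rec_nat 0 (\<lambda>m y. Suc m + y) m = triangle m" for m
    by (induction m) auto
  ultimately have "computable 1 (\<lambda>xs. triangle (hd xs))"
    by (elim computable_cong) simp
  then show "computable n f \<Longrightarrow> computable n (\<lambda>xs. triangle (f xs))"
    by (rule computable_unary)
qed

lemma computable_pred_eq:
  assumes "computable n f" "computable n g"
  shows "computable_pred n (\<lambda>xs. f xs = g xs)"
proof -
  have "computable n (\<lambda>xs. 1 - ((f xs - g xs) + (g xs - f xs)))"
    using assms by (intro computable_diff computable_add computable_const)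
  then show ?thesis
    unfolding computable_pred_def by (elim computable_cong) simp
qed

lemma computable_pred_less:
  assumes "computable n f" "computable n g"
  shows "computable_pred n (\<lambda>xs. f xs < g xs)"
proof -
  have "computable n (\<lambda>xs. 1 - (1 - (g xs - f xs)))"
    using assms by (intro computable_diff computable_const)
  then show ?thesis
    unfolding computable_pred_def by (elim computable_cong) simp
qed

lemma computable_pred_le: "computable n f \<Longrightarrow> computable n g \<Longrightarrow> computable_pred n (\<lambda>xs. f xs \<le> g xs)"
  using computable_pred_less[of n f "\<lambda>xs. Suc (g xs)"] computable_Suc by (simp add: less_Suc_eq_le)

lemma computable_pred_not:
  assumes "computable_pred n P"
  shows "computable_pred n (\<lambda>xs. \<not> P xs)"
proof -
  have "computable n (\<lambda>xs. 1 - (if P xs then 1 else 0))"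
    using assms unfolding computable_pred_def by (intro computable_diff computable_const)
  then show ?thesis
    unfolding computable_pred_def by (elim computable_cong) simp
qed

lemma computable_pred_conj:
  assumes "computable_pred n P" "computable_pred n Q"
  shows "computable_pred n (\<lambda>xs. P xs \<and> Q xs)"
proof -
  have "computable n (\<lambda>xs. (if P xs then 1 else 0) * (if Q xs then 1 else 0))"
    using assms unfolding computable_pred_def by (intro computable_mult)
  then show ?thesis
    unfolding computable_pred_def by (elim computable_cong) simp
qed

lemma computable_pred_iff:
  assumes "computable_pred n P" "computable_pred n Q"
  shows "computable_pred n (\<lambda>xs. P xs \<longleftrightarrow> Q xs)"
proof -
  have "computable_pred n (\<lambda>xs. (if P xs then 1 else 0) = (if Q xs then 1 else (0::nat)))"
    using assms[unfolded computable_pred_def] by (rule computable_pred_eq)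
  then show ?thesis
    unfolding computable_pred_def by (elim computable_cong) simp
qed

lemma computable_if:
  assumes "computable_pred n P" "computable n f" "computable n g"
  shows "computable n (\<lambda>xs. if P xs then f xs else g xs)"
proof -
  have "computable n (\<lambda>xs. (if P xs then 1 else 0) * f xs + (1 - (if P xs then 1 else 0)) * g xs)"
    using assms unfolding computable_pred_def by (intro computable_add computable_mult computable_diff computable_const)
  then show ?thesis
    by (elim computable_cong) simp
qed

lemma computable_table: "computable n f \<Longrightarrow> computable n (\<lambda>xs. if f xs < K then T (f xs) else 0)"
proof (induction K)
  case 0
  then show ?case by (simp add: computable_const)
next
  case (Suc K)
  have "computable n (\<lambda>xs. if f xs = K then T K else if f xs < K then T (f xs) else 0)"
    using Suc by (intro computable_if[OF computable_pred_eq] computable_const) auto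
  then show ?case
    by (elim computable_cong) (auto simp: less_Suc_eq)
qed

definition tri_root :: "nat \<Rightarrow> nat" where
  "tri_root z = (LEAST s. z < triangle (Suc s))"

lemma less_triangle_Suc: "z < triangle (Suc z)"
proof -
  have "z \<le> triangle z"
    by (induction z) auto
  then show ?thesis
    by simp
qed

lemma tri_root_bounds: "triangle (tri_root z) \<le> z" "z < triangle (Suc (tri_root z))"
proof -
  show "z < triangle (Suc (tri_root z))"
    unfolding tri_root_def by (rule LeastI[of "\<lambda>s. z < triangle (Suc s)", OF less_triangle_Suc])
  show "triangle (tri_root z) \<le> z"
  proof (cases "tri_root z")
    case (Suc s)
    then have "\<not> z < triangle (Suc s)"
      unfolding tri_root_def using not_less_Least[of s] by (metis lessI)
    then show ?thesis using Suc by simp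
  qed simp
qed

lemma prod_decode_tri_root:
  "prod_decode z = (z - triangle (tri_root z), tri_root z - (z - triangle (tri_root z)))"
proof -
  let ?s = "tri_root z"
  have "z - triangle ?s \<le> ?s"
    using tri_root_bounds[of z] by simp
  then have "prod_encode (z - triangle ?s, ?s - (z - triangle ?s)) = z"
    unfolding prod_encode_def using tri_root_bounds(1)[of z] by simp
  then show ?thesis
    by (metis prod_encode_inverse)
qed

lemma computable_tri_root: "computable n f \<Longrightarrow> computable n (\<lambda>xs. tri_root (f xs))"
proof -
  have "computable (Suc 1) (\<lambda>xs. Suc (xs ! 1) - triangle (Suc (xs ! 0)))"
    by (intro computable_diff computable_Suc computable_triangle computable_proj) auto
  then have "computable 1 (\<lambda>ys. LEAST y. Suc ((y # ys) ! 1) - triangle (Suc ((y # ys) ! 0)) = 0)"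
    by (rule computable_LEAST) (use less_triangle_Suc in \<open>auto simp: Suc_le_eq simp del: triangle_Suc\<close>)
  then have "computable 1 (\<lambda>xs. tri_root (hd xs))"
    by (elim computable_cong) (auto simp: tri_root_def length_Suc_conv Suc_le_eq simp del: triangle_Suc)
  then show "computable n f \<Longrightarrow> computable n (\<lambda>xs. tri_root (f xs))"
    by (rule computable_unary)
qed

lemma computable_prod_encode:
  "computable n f \<Longrightarrow> computable n g \<Longrightarrow> computable n (\<lambda>xs. prod_encode (f xs, g xs))"
  unfolding prod_encode_def by (simp add: computable_add computable_triangle)

lemma computable_fst_prod_decode: "computable n f \<Longrightarrow> computable n (\<lambda>xs. fst (prod_decode (f xs)))"
  unfolding prod_decode_tri_root by (simp add: computable_diff computable_triangle computable_tri_root)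

lemma computable_snd_prod_decode: "computable n f \<Longrightarrow> computable n (\<lambda>xs. snd (prod_decode (f xs)))"
  unfolding prod_decode_tri_root by (simp add: computable_diff computable_triangle computable_tri_root)

section \<open>Equality in a presented group\<close>

lemmas [trans] = pe_trans

lemma inv_letter_inv_letter [simp]: "inv_letter (inv_letter x) = x"
  by (simp add: inv_letter_def)

lemma pres_eq_cong: "pres_eq R u v \<Longrightarrow> pres_eq R (x @ u @ y) (x @ v @ y)"
proof (induction rule: pres_eq.induct)
  case (pe_cancel u a v)
  show ?case
    using pres_eq.pe_cancel[of R "x @ u" a "v @ y"] by simp
next
  case (pe_rel r u v)
  show ?case
    using pres_eq.pe_rel[OF pe_rel.hyps, of "x @ u" "v @ y"] by simp
next
  case (pe_trans u v w)
  from pe_trans.IH show ?case by (rule pres_eq.pe_trans)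
qed (simp_all add: pe_refl pe_sym)

lemma pres_eq_prepend: "pres_eq R u v \<Longrightarrow> pres_eq R (x @ u) (x @ v)"
  using pres_eq_cong[of R u v x "[]"] by simp

lemma pres_eq_append: "pres_eq R u v \<Longrightarrow> pres_eq R (u @ y) (v @ y)"
  using pres_eq_cong[of R u v "[]" y] by simp

lemma pres_eq_inv_cancel: "pres_eq R (u @ [inv_letter x, x] @ v) (u @ v)"
  using pe_cancel[of R u "inv_letter x" v] by simp

definition gen_pow :: "nat \<Rightarrow> int \<Rightarrow> word" where
  "gen_pow g z = (if 0 \<le> z then replicate (nat z) (g, False) else replicate (nat (- z)) (g, True))"

lemma apow_eq_gen_pow: "apow = gen_pow 0"
  by (simp add: fun_eq_iff apow_def gen_pow_def)

lemma gen_pow_0 [simp]: "gen_pow g 0 = []"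
  by (simp add: gen_pow_def)

lemma apow_0 [simp]: "apow 0 = []"
  by (simp add: apow_eq_gen_pow)

lemma fst_set_gen_pow: "x \<in> set (gen_pow g z) \<Longrightarrow> fst x = g"
  by (auto simp: gen_pow_def split: if_splits)

lemma gen_pow_snoc_gen: "pres_eq R (gen_pow g z @ [(g, False)]) (gen_pow g (z + 1))"
proof (cases "0 \<le> z")
  case True
  then have "nat (z + 1) = Suc (nat z)"
    by simp
  then show ?thesis
    using True by (simp add: gen_pow_def replicate_append_same pe_refl)
next
  case False
  then have "nat (- z) = Suc (nat (- (z + 1)))"
    by simp
  then have "gen_pow g z = gen_pow g (z + 1) @ [(g, True)]"
    using False by (simp add: gen_pow_def replicate_append_same)
  then show ?thesis
    using pe_cancel[of R "gen_pow g (z + 1)" "(g, True)" "[]"] by (simp add: inv_letter_def)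
qed

lemma gen_pow_snoc_inv: "pres_eq R (gen_pow g z @ [(g, True)]) (gen_pow g (z - 1))"
proof (cases "0 < z")
  case False
  then have "nat (- (z - 1)) = Suc (nat (- z))"
    by simp
  then show ?thesis
    using False by (simp add: gen_pow_def replicate_append_same pe_refl)
next
  case True
  then have "nat z = Suc (nat (z - 1))"
    by simp
  then have "gen_pow g z = gen_pow g (z - 1) @ [(g, False)]"
    using True by (simp add: gen_pow_def replicate_append_same)
  then show ?thesis
    using pe_cancel[of R "gen_pow g (z - 1)" "(g, False)" "[]"] by (simp add: inv_letter_def)
qed

lemma gen_pow_snoc: "pres_eq R (gen_pow g z @ [(g, e)]) (gen_pow g (z + (if e then -1 else 1)))"
  using gen_pow_snoc_gen gen_pow_snoc_inv by (cases e) auto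

lemma gen_pow_add: "pres_eq R (gen_pow g x @ gen_pow g y) (gen_pow g (x + y))"
proof (induction y rule: int_induct[where k = 0])
  case base
  then show ?case by (simp add: pe_refl)
next
  case (step1 y)
  have "pres_eq R (gen_pow g x @ gen_pow g (y + 1)) (gen_pow g x @ gen_pow g y @ [(g, False)])"
    by (rule pres_eq_prepend[OF pe_sym[OF gen_pow_snoc_gen]])
  also have "pres_eq R \<dots> (gen_pow g (x + y) @ [(g, False)])"
    using pres_eq_append[OF step1.IH] by simp
  also have "pres_eq R \<dots> (gen_pow g (x + (y + 1)))"
    using gen_pow_snoc_gen[of R g "x + y"] by (simp add: add.assoc)
  finally show ?case .
next
  case (step2 y)
  have "pres_eq R (gen_pow g x @ gen_pow g (y - 1)) (gen_pow g x @ gen_pow g y @ [(g, True)])"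
    by (rule pres_eq_prepend[OF pe_sym[OF gen_pow_snoc_inv]])
  also have "pres_eq R \<dots> (gen_pow g (x + y) @ [(g, True)])"
    using pres_eq_append[OF step2.IH] by simp
  also have "pres_eq R \<dots> (gen_pow g (x + (y - 1)))"
    using gen_pow_snoc_inv[of R g "x + y"] by (simp add: add_diff_eq)
  finally show ?case .
qed

definition letters_commute :: "word set \<Rightarrow> letter \<Rightarrow> letter \<Rightarrow> bool" where
  "letters_commute R x y \<longleftrightarrow> pres_eq R [x, y] [y, x]"

lemma letters_commute_sym: "letters_commute R x y \<Longrightarrow> letters_commute R y x"
  unfolding letters_commute_def by (rule pe_sym)

lemma letters_commute_inv_letter: "letters_commute R x y \<Longrightarrow> letters_commute R (inv_letter x) y"
  unfolding letters_commute_def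
proof -
  assume xy: "pres_eq R [x, y] [y, x]"
  have "pres_eq R [inv_letter x, y] ([inv_letter x] @ [y, x] @ [inv_letter x])"
    using pe_cancel[of R "[inv_letter x, y]" x "[]"] by (simp add: pe_sym)
  also have "pres_eq R \<dots> ([inv_letter x] @ [x, y] @ [inv_letter x])"
    using pres_eq_cong[OF pe_sym[OF xy]] by blast
  also have "pres_eq R \<dots> [y, inv_letter x]"
    using pres_eq_inv_cancel[of R "[]" x "[y, inv_letter x]"] by simp
  finally show "pres_eq R [inv_letter x, y] [y, inv_letter x]" .
qed

lemma letters_commute_any_signs:
  assumes "letters_commute R (g, False) (h, False)"
  shows "letters_commute R (g, e) (h, e')"
proof -
  have "letters_commute R (g, e) (h, False)" for e
    using assms letters_commute_inv_letter[OF assms] by (cases e) (simp_all add: inv_letter_def)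
  then have "letters_commute R (h, False) (g, e)"
    by (rule letters_commute_sym)
  then have "letters_commute R (h, e') (g, e)"
    using letters_commute_inv_letter[of R "(h, False)"] by (cases e') (simp_all add: inv_letter_def)
  then show ?thesis
    by (rule letters_commute_sym)
qed

lemma letters_commute_words:
  assumes "\<forall>x\<in>set u. \<forall>y\<in>set w. letters_commute R x y"
  shows "pres_eq R (u @ w) (w @ u)"
proof -
  have letter_word: "pres_eq R (x # w) (w @ [x])" if "\<forall>y\<in>set w. letters_commute R x y" for x w
    using that
  proof (induction w)
    case (Cons y w)
    have "pres_eq R (x # y # w) ([y, x] @ w)"
      using pres_eq_append[of R "[x, y]" "[y, x]" w] Cons.prems by (simp add: letters_commute_def)
    also have "pres_eq R \<dots> ([y] @ w @ [x])"
      using pres_eq_prepend[OF Cons.IH, of "[y]"] Cons.prems by simp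
    finally show ?case by simp
  qed (simp add: pe_refl)
  show ?thesis
    using assms
  proof (induction u)
    case (Cons x u)
    have "pres_eq R ([x] @ u @ w) ([x] @ w @ u)"
      using pres_eq_prepend[OF Cons.IH, of "[x]"] Cons.prems by simp
    also have "pres_eq R \<dots> (w @ [x] @ u)"
      using pres_eq_append[OF letter_word] Cons.prems by simp
    finally show ?case by simp
  qed (simp add: pe_refl)
qed

section \<open>Normal forms\<close>

type_synonym stack = "(int \<times> letter) list"
type_synonym state = "stack \<times> int \<times> int"

definition stack_word :: "stack \<Rightarrow> word" where
  "stack_word L = concat (map (\<lambda>(x, l). apow x @ [l]) (rev L))"

definition state_word :: "state \<Rightarrow> word" where
  "state_word N = (case N of (L, p, q) \<Rightarrow> stack_word L @ apow p @ gen_pow 1 q)"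

fun reduced :: "stack \<Rightarrow> bool" where
  "reduced ((x, l) # (x', l') # L) \<longleftrightarrow> \<not> (l = inv_letter l' \<and> x = 0) \<and> reduced ((x', l') # L)"
| "reduced _ \<longleftrightarrow> True"

definition push_stable :: "stack \<Rightarrow> int \<Rightarrow> int \<Rightarrow> letter \<Rightarrow> stack \<times> int" where
  "push_stable L r d l = (case L of
       (x, l') # L' \<Rightarrow> if l' = inv_letter l \<and> r = 0 then (L', x + d) else ((r, l) # L, d)
     | [] \<Rightarrow> ([(r, l)], d))"

text \<open>Pushing \<open>b\<^sub>i\<close> past \<open>a\<^sup>p t\<^sup>q\<close> uses \<open>t\<^sup>q b\<^sub>i = b\<^sub>i a\<^bsup>n\<^sub>i q\<^esup> t\<^sup>q\<close>, pushing
  \<open>b\<^sub>i\<^sup>-\<^sup>1\<close> uses \<open>a\<^sup>p t\<^sup>q b\<^sub>i\<^sup>-\<^sup>1 = a\<^bsup>p - n\<^sub>i q\<^esup> b\<^sub>i\<^sup>-\<^sup>1 t\<^sup>q\<close>.\<close>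

definition act_letter :: "(nat \<Rightarrow> int) \<Rightarrow> letter \<Rightarrow> state \<Rightarrow> state" where
  "act_letter n l N = (case N of (L, p, q) \<Rightarrow> case l of (g, e) \<Rightarrow>
     if g = 0 then (L, p + (if e then -1 else 1), q)
     else if g = 1 then (L, p, q + (if e then -1 else 1))
     else case push_stable L (if e then p - n (g - 1) * q else p) (if e then 0 else n (g - 1) * q) l of
            (L', p') \<Rightarrow> (L', p', q))"

definition act_word :: "(nat \<Rightarrow> int) \<Rightarrow> word \<Rightarrow> state \<Rightarrow> state" where
  "act_word n w N = foldl (\<lambda>N l. act_letter n l N) N w"

lemma stack_word_Nil [simp]: "stack_word [] = []"
  by (simp add: stack_word_def)

lemma stack_word_Cons [simp]: "stack_word ((x, l) # L) = stack_word L @ apow x @ [l]"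
  by (simp add: stack_word_def)

lemma act_word_Nil [simp]: "act_word n [] N = N"
  by (simp add: act_word_def)

lemma act_word_Cons [simp]: "act_word n (l # w) N = act_word n w (act_letter n l N)"
  by (simp add: act_word_def)

lemma act_word_append [simp]: "act_word n (u @ w) N = act_word n w (act_word n u N)"
  by (simp add: act_word_def)

lemma reduced_push_stable: "reduced L \<Longrightarrow> push_stable L r d l = (L', p') \<Longrightarrow> reduced L'"
  by (cases L rule: reduced.cases) (auto simp: push_stable_def split: if_splits)

lemma reduced_act_letter: "reduced L \<Longrightarrow> act_letter n l (L, p, q) = (L', p', q') \<Longrightarrow> reduced L'"
  by (auto simp: act_letter_def split: prod.splits if_splits intro: reduced_push_stable)

lemma reduced_act_word: "reduced (fst N) \<Longrightarrow> reduced (fst (act_word n w N))"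
proof (induction w arbitrary: N)
  case (Cons l w)
  then show ?case
    using reduced_act_letter[of "fst N" n l] by (metis act_word_Cons prod.collapse)
qed simp

lemma act_letter_inv_letter:
  "reduced L \<Longrightarrow> act_letter n (inv_letter l) (act_letter n l (L, p, q)) = (L, p, q)"
  by (cases l, cases L rule: reduced.cases)
    (auto simp: act_letter_def push_stable_def inv_letter_def algebra_simps)

lemma act_word_apow: "act_word n (apow z) (L, p, q) = (L, p + z, q)"
proof -
  have "act_word n (replicate m (0, e)) (L, p, q) = (L, p + (if e then - int m else int m), q)" for m e p
    by (induction m arbitrary: p) (auto simp: act_letter_def algebra_simps)
  then show ?thesis
    by (simp add: apow_def)
qed

lemma act_word_relator:
  assumes "reduced L" and "r \<in> G_relators k n"
  shows "act_word n r (L, p, q) = (L, p, q)"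
proof -
  consider "r = [(0, False), (1, False), (0, True), (1, True)]"
    | i where "1 \<le> i" "r = [(i + 1, True), (1, False), (i + 1, False), (1, True)] @ apow (- n i)"
    using assms(2) unfolding G_relators_def by blast
  then show ?thesis
  proof cases
    case 1
    then show ?thesis by (simp add: act_letter_def)
  next
    case (2 i)
    have "act_word n [(i + 1, True), (1, False), (i + 1, False), (1, True)] (L, p, q) = (L, p + n i, q)"
      using 2 assms(1) by (cases L rule: reduced.cases)
        (auto simp: act_letter_def push_stable_def inv_letter_def algebra_simps)
    then show ?thesis
      using 2 by (simp add: act_word_apow)
  qed
qed

lemma act_word_pres_eq:
  "pres_eq (G_relators k n) u v \<Longrightarrow> reduced (fst N) \<Longrightarrow> act_word n u N = act_word n v N"
proof (induction arbitrary: N rule: pres_eq.induct)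
  case (pe_cancel u l v)
  obtain L p q where "act_word n u N = (L, p, q)"
    by (cases "act_word n u N")
  moreover have "reduced L"
    using reduced_act_word[OF pe_cancel, of n u] calculation by simp
  ultimately show ?case
    by (simp add: act_letter_inv_letter)
next
  case (pe_rel r u v)
  obtain L p q where "act_word n u N = (L, p, q)"
    by (cases "act_word n u N")
  moreover have "reduced L"
    using reduced_act_word[OF pe_rel(2), of n u] calculation by simp
  ultimately show ?case
    using act_word_relator[OF _ pe_rel(1)] by simp
qed simp_all

lemma push_stable_word:
  "pres_eq R (stack_word L @ apow r @ [l] @ apow d @ W)
     (case push_stable L r d l of (L', p') \<Rightarrow> stack_word L' @ apow p' @ W)"
proof (cases L)
  case (Cons a L')
  obtain x l' where a: "a = (x, l')"
    by (cases a)
  show ?thesis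
  proof (cases "l' = inv_letter l \<and> r = 0")
    case True
    then have "stack_word L @ apow r @ [l] @ apow d @ W = (stack_word L' @ apow x) @ [inv_letter l, l] @ apow d @ W"
      using Cons a by simp
    also have "pres_eq R \<dots> (stack_word L' @ apow x @ apow d @ W)"
      using pres_eq_inv_cancel[of R "stack_word L' @ apow x"] by simp
    also have "pres_eq R \<dots> (stack_word L' @ apow (x + d) @ W)"
      using pres_eq_cong[OF gen_pow_add[of R 0 x d], of "stack_word L'" W] by (simp add: apow_eq_gen_pow)
    finally show ?thesis
      using True Cons a by (simp add: push_stable_def)
  qed (use Cons a in \<open>auto simp: push_stable_def pe_refl\<close>)
qed (simp add: push_stable_def pe_refl)

context
  fixes k :: nat and n :: "nat \<Rightarrow> int"
begin

abbreviation G_eq :: "word \<Rightarrow> word \<Rightarrow> bool" (infix "\<approx>" 50) where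
  "u \<approx> v \<equiv> pres_eq (G_relators k n) u v"

lemma a_t_words_commute:
  assumes "\<forall>x\<in>set u. fst x = 0" and "\<forall>y\<in>set w. fst y = 1"
  shows "u @ w \<approx> w @ u"
proof -
  let ?r = "[(0::nat, False), (1::nat, False), (0, True), (1, True)]"
  have "[(0, False), (1, False)] \<approx> [(0, False), (1, False)] @ [(0, True), (0, False)]"
    using pe_cancel[of _ "[(0, False), (1, False)]" "(0, True)" "[]"] by (simp add: pe_sym inv_letter_def)
  also have "\<dots> \<approx> [(0, False), (1, False), (0, True)] @ [(1, True), (1, False)] @ [(0, False)]"
    using pe_cancel[of _ "[(0, False), (1, False), (0, True)]" "(1, True)" "[(0, False)]"]
    by (simp add: pe_sym inv_letter_def)
  also have "\<dots> \<approx> [(1, False), (0, False)]"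
    using pe_rel[of ?r "G_relators k n" "[]" "[(1, False), (0, False)]"] by (simp add: G_relators_def)
  finally have "letters_commute (G_relators k n) (0, False) (1, False)"
    unfolding letters_commute_def .
  then have "letters_commute (G_relators k n) x y" if "fst x = 0" "fst y = 1" for x y
    using that letters_commute_any_signs by (metis prod.collapse)
  then show ?thesis
    using assms by (intro letters_commute_words) blast
qed

lemma t_a_words_commute:
  "\<forall>x\<in>set u. fst x = 1 \<Longrightarrow> \<forall>y\<in>set w. fst y = 0 \<Longrightarrow> u @ w \<approx> w @ u"
  using a_t_words_commute[of w u] by (simp add: pe_sym)

lemma t_pow_apow_commute: "gen_pow 1 q @ apow p \<approx> apow p @ gen_pow 1 q"
  by (rule t_a_words_commute) (auto simp: apow_eq_gen_pow dest: fst_set_gen_pow)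

lemma apow_add: "u @ apow x @ apow y @ v \<approx> u @ apow (x + y) @ v"
  using pres_eq_cong[OF gen_pow_add[of _ 0 x y]] by (simp add: apow_eq_gen_pow)

lemma apow_cancel: "u @ apow z @ apow (- z) @ v \<approx> u @ v"
  using apow_add[of u z "- z" v] by simp

lemma t_b_rel:
  assumes "1 \<le> i" "i \<le> k"
  shows "[(1, False), (i + 1, False)] \<approx> [(i + 1, False)] @ apow (n i) @ [(1, False)]"
proof -
  let ?b = "(i + 1, False)" and ?bi = "(i + 1, True)" and ?t = "(1::nat, False)" and ?ti = "(1::nat, True)"
  have rel: "[?bi, ?t, ?b, ?ti] @ apow (- n i) \<in> G_relators k n"
    using assms unfolding G_relators_def by blast
  have "[?t, ?b] \<approx> [?b, ?bi] @ [?t, ?b]"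
    using pe_cancel[of _ "[]" ?b "[?t, ?b]"] by (simp add: pe_sym inv_letter_def)
  also have "\<dots> \<approx> [?b, ?bi, ?t, ?b] @ [?ti, ?t] @ []"
    using pe_cancel[of _ "[?b, ?bi, ?t, ?b]" ?ti "[]"] by (simp add: pe_sym inv_letter_def)
  also have "\<dots> \<approx> [?b, ?bi, ?t, ?b, ?ti] @ apow (- n i) @ apow (- (- n i)) @ [?t]"
    using apow_cancel[of "[?b, ?bi, ?t, ?b, ?ti]" "- n i" "[?t]"] by (simp add: pe_sym)
  also have "\<dots> = [?b] @ ([?bi, ?t, ?b, ?ti] @ apow (- n i)) @ (apow (n i) @ [?t])"
    by simp
  also have "\<dots> \<approx> [?b] @ apow (n i) @ [?t]"
    using pe_rel[OF rel, of "[?b]" "apow (n i) @ [?t]"] by simp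
  finally show ?thesis .
qed

lemma t_inv_b_rel:
  assumes "1 \<le> i" "i \<le> k"
  shows "[(1, True), (i + 1, False)] \<approx> [(i + 1, False)] @ apow (- n i) @ [(1, True)]"
proof -
  let ?b = "(i + 1, False)" and ?t = "(1::nat, False)" and ?ti = "(1::nat, True)"
  have "[?b] @ apow (n i) @ [?t] @ [?ti] @ apow (- n i) \<approx> [?b] @ apow (n i) @ apow (- n i)"
    using pe_cancel[of _ "[?b] @ apow (n i)" ?t "apow (- n i)"] by (simp add: inv_letter_def)
  also have "\<dots> \<approx> [?b]"
    using apow_cancel[of "[?b]" "n i" "[]"] by simp
  finally have "[?b] @ apow (n i) @ [?t] @ [?ti] @ apow (- n i) \<approx> [?b]" .
  then have "[?ti, ?b] \<approx> [?ti] @ ([?b] @ apow (n i) @ [?t]) @ [?ti] @ apow (- n i)"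
    using pres_eq_prepend[OF pe_sym, of _ _ _ "[?ti]"] by simp
  also have "\<dots> \<approx> [?ti] @ [?t, ?b] @ [?ti] @ apow (- n i)"
    using pres_eq_cong[OF pe_sym[OF t_b_rel[OF assms]], of "[?ti]" "[?ti] @ apow (- n i)"] by simp
  also have "\<dots> \<approx> [?b] @ [?ti] @ apow (- n i)"
    using pe_cancel[of _ "[]" ?ti "[?b] @ [?ti] @ apow (- n i)"] by (simp add: inv_letter_def)
  also have "\<dots> \<approx> [?b] @ apow (- n i) @ [?ti]"
    using pres_eq_prepend[OF t_pow_apow_commute[of "- 1" "- n i"], of "[?b]"]
    by (simp add: gen_pow_def)
  finally show ?thesis .
qed

lemma t_pow_b_rel:
  assumes "1 \<le> i" "i \<le> k"
  shows "gen_pow 1 q @ [(i + 1, False)] \<approx> [(i + 1, False)] @ apow (n i * q) @ gen_pow 1 q"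
proof -
  let ?b = "(i + 1, False)"
  have step: "gen_pow 1 q @ [(1, e)] @ [?b] \<approx> [?b] @ apow (n i * q + c) @ gen_pow 1 q @ [(1, e)]"
    if IH: "gen_pow 1 q @ [?b] \<approx> [?b] @ apow (n i * q) @ gen_pow 1 q"
      and t: "[(1, e), ?b] \<approx> [?b] @ apow c @ [(1, e)]" for q c e
  proof -
    have "gen_pow 1 q @ [(1, e)] @ [?b] \<approx> (gen_pow 1 q @ [?b]) @ apow c @ [(1, e)]"
      using pres_eq_prepend[OF t, of "gen_pow 1 q"] by simp
    also have "\<dots> \<approx> [?b] @ apow (n i * q) @ (gen_pow 1 q @ apow c) @ [(1, e)]"
      using pres_eq_append[OF IH] by simp
    also have "\<dots> \<approx> [?b] @ apow (n i * q) @ (apow c @ gen_pow 1 q) @ [(1, e)]"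
      using pres_eq_cong[OF t_pow_apow_commute, where x = "[?b] @ apow (n i * q)" and y = "[(1, e)]"]
      by simp
    also have "\<dots> \<approx> [?b] @ apow (n i * q + c) @ gen_pow 1 q @ [(1, e)]"
      using apow_add[of "[?b]" "n i * q" c "gen_pow 1 q @ [(1, e)]"] by simp
    finally show ?thesis .
  qed
  show ?thesis
  proof (induction q rule: int_induct[where k = 0])
    case base
    then show ?case by (simp add: pe_refl)
  next
    case (step1 q)
    have "gen_pow 1 (q + 1) @ [?b] \<approx> gen_pow 1 q @ [(1, False)] @ [?b]"
      using pres_eq_append[OF pe_sym[OF gen_pow_snoc_gen]] by simp
    also have "\<dots> \<approx> [?b] @ apow (n i * q + n i) @ gen_pow 1 q @ [(1, False)]"
      using step[OF step1.IH t_b_rel[OF assms]] .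
    also have "\<dots> \<approx> [?b] @ apow (n i * (q + 1)) @ gen_pow 1 (q + 1)"
      using pres_eq_prepend[OF gen_pow_snoc_gen[of "G_relators k n" 1 q], of "[?b] @ apow (n i * q + n i)"]
      by (simp add: algebra_simps)
    finally show ?case .
  next
    case (step2 q)
    have "gen_pow 1 (q - 1) @ [?b] \<approx> gen_pow 1 q @ [(1, True)] @ [?b]"
      using pres_eq_append[OF pe_sym[OF gen_pow_snoc_inv]] by simp
    also have "\<dots> \<approx> [?b] @ apow (n i * q + - n i) @ gen_pow 1 q @ [(1, True)]"
      using step[OF step2.IH t_inv_b_rel[OF assms]] .
    also have "\<dots> \<approx> [?b] @ apow (n i * (q - 1)) @ gen_pow 1 (q - 1)"
      using pres_eq_prepend[OF gen_pow_snoc_inv[of "G_relators k n" 1 q], of "[?b] @ apow (n i * q + - n i)"]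
      by (simp add: algebra_simps)
    finally show ?case .
  qed
qed

lemma t_pow_b_inv_rel:
  assumes "1 \<le> i" "i \<le> k"
  shows "apow (n i * q) @ gen_pow 1 q @ [(i + 1, True)] \<approx> [(i + 1, True)] @ gen_pow 1 q"
proof -
  let ?b = "(i + 1, False)" and ?bi = "(i + 1, True)"
  have "apow (n i * q) @ gen_pow 1 q @ [?bi] \<approx> [?bi] @ ([?b] @ apow (n i * q) @ gen_pow 1 q) @ [?bi]"
    using pe_cancel[of _ "[]" ?bi "apow (n i * q) @ gen_pow 1 q @ [?bi]"] by (simp add: pe_sym inv_letter_def)
  also have "\<dots> \<approx> [?bi] @ (gen_pow 1 q @ [?b]) @ [?bi]"
    using pres_eq_cong[OF pe_sym[OF t_pow_b_rel[OF assms]]] by blast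
  also have "\<dots> \<approx> [?bi] @ gen_pow 1 q"
    using pe_cancel[of _ "[?bi] @ gen_pow 1 q" ?b "[]"] by (simp add: inv_letter_def)
  finally show ?thesis .
qed

lemma state_word_act_letter:
  assumes "fst l < k + 2"
  shows "state_word N @ [l] \<approx> state_word (act_letter n l N)"
proof -
  obtain L p q where N: "N = (L, p, q)"
    by (cases N)
  obtain g e where l: "l = (g, e)"
    by (cases l)
  consider "g = 0" | "g = 1" | i where "1 \<le> i" "i \<le> k" "g = i + 1"
    using assms l by (cases g) force+
  then show ?thesis
  proof cases
    case 1
    have "stack_word L @ apow p @ gen_pow 1 q @ [(0, e)] \<approx> stack_word L @ (apow p @ [(0, e)]) @ gen_pow 1 q"
      using pres_eq_cong[OF t_a_words_commute, of "gen_pow 1 q" "[(0, e)]" "stack_word L @ apow p" "[]"]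
      by (simp add: fst_set_gen_pow)
    also have "\<dots> \<approx> stack_word L @ apow (p + (if e then -1 else 1)) @ gen_pow 1 q"
      using pres_eq_cong[OF gen_pow_snoc] by (simp add: apow_eq_gen_pow)
    finally show ?thesis
      using 1 unfolding N l by (simp add: state_word_def act_letter_def)
  next
    case 2
    have "stack_word L @ apow p @ gen_pow 1 q @ [(1, e)] \<approx> stack_word L @ apow p @ gen_pow 1 (q + (if e then -1 else 1))"
      using pres_eq_prepend[OF gen_pow_snoc[of "G_relators k n" 1 q e], of "stack_word L @ apow p"] by (simp only: append_assoc)
    then show ?thesis
      using 2 unfolding N l by (simp add: state_word_def act_letter_def)
  next
    case (3 i)
    show ?thesis
    proof (cases e)
      case False
      have "stack_word L @ apow p @ gen_pow 1 q @ [l] \<approx> stack_word L @ apow p @ [l] @ apow (n i * q) @ gen_pow 1 q"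
        using pres_eq_prepend[OF t_pow_b_rel[OF 3(1,2), of q], of "stack_word L @ apow p"] False 3 l by simp
      also have "\<dots> \<approx> (case push_stable L p (n i * q) l of (L', p') \<Rightarrow> stack_word L' @ apow p' @ gen_pow 1 q)"
        by (rule push_stable_word)
      finally show ?thesis
        using False 3 unfolding N l by (simp add: state_word_def act_letter_def split: prod.splits)
    next
      case True
      have "stack_word L @ apow p @ gen_pow 1 q @ [l] \<approx>
          stack_word L @ apow (p - n i * q) @ apow (n i * q) @ gen_pow 1 q @ [l]"
        using pe_sym[OF apow_add[of "stack_word L" "p - n i * q" "n i * q" "gen_pow 1 q @ [l]"]] by simp
      also have "\<dots> \<approx> stack_word L @ apow (p - n i * q) @ [l] @ apow 0 @ gen_pow 1 q"
        using pres_eq_prepend[OF t_pow_b_inv_rel[OF 3(1,2), of q], of "stack_word L @ apow (p - n i * q)"]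
          True 3 l by simp
      also have "\<dots> \<approx> (case push_stable L (p - n i * q) 0 l of (L', p') \<Rightarrow> stack_word L' @ apow p' @ gen_pow 1 q)"
        by (rule push_stable_word)
      finally show ?thesis
        using True 3 unfolding N l by (simp add: state_word_def act_letter_def split: prod.splits)
    qed
  qed
qed

lemma state_word_act_word:
  "\<forall>l\<in>set w. fst l < k + 2 \<Longrightarrow> state_word N @ w \<approx> state_word (act_word n w N)"
proof (induction w arbitrary: N)
  case (Cons l w)
  have "state_word N @ [l] @ w \<approx> state_word (act_letter n l N) @ w"
    using pres_eq_append[OF state_word_act_letter] Cons.prems by simp
  also have "\<dots> \<approx> state_word (act_word n w (act_letter n l N))"
    using Cons by simp
  finally show ?case by simp
qed (simp add: pe_refl)

lemma G_eq_Nil_iff_act_word: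
  assumes "\<forall>l\<in>set w. fst l < k + 2"
  shows "w \<approx> [] \<longleftrightarrow> act_word n w ([], 0, 0) = ([], 0, 0)"
proof
  assume "w \<approx> []"
  from act_word_pres_eq[OF this, of "([], 0, 0)"] show "act_word n w ([], 0, 0) = ([], 0, 0)"
    by simp
next
  assume "act_word n w ([], 0, 0) = ([], 0, 0)"
  with state_word_act_word[OF assms, of "([], 0, 0)"] show "w \<approx> []"
    by (simp add: state_word_def)
qed

end

section \<open>Deciding the word problem by a computable function\<close>

abbreviation npair :: "nat \<Rightarrow> nat \<Rightarrow> nat" where
  "npair a b \<equiv> prod_encode (a, b)"

abbreviation nfst :: "nat \<Rightarrow> nat" where
  "nfst c \<equiv> fst (prod_decode c)"

abbreviation nsnd :: "nat \<Rightarrow> nat" where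
  "nsnd c \<equiv> snd (prod_decode c)"

text \<open>An integer \<open>z\<close> is coded by any pair \<open>\<langle>u, v\<rangle>\<close> with \<open>z = u - v\<close>, a letter
  \<open>(g, e)\<close> by \<open>\<langle>g, 1\<rangle>\<close> or \<open>\<langle>g, 0\<rangle>\<close>, a stack by the list of the codes \<open>\<langle>x, l\<rangle>\<close> of its
  entries, and a state \<open>(L, p, q)\<close> by \<open>\<langle>L, \<langle>p, q\<rangle>\<rangle>\<close>.\<close>

definition decode_int :: "nat \<Rightarrow> int" where
  "decode_int c = int (nfst c) - int (nsnd c)"

definition decode_letter :: "nat \<Rightarrow> letter" where
  "decode_letter c = (nfst c, nsnd c = 1)"

definition decode_stack :: "nat \<Rightarrow> stack" where
  "decode_stack c = map (\<lambda>e. (decode_int (nfst e), decode_letter (nsnd e))) (list_decode c)"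

definition decode_state :: "nat \<Rightarrow> state" where
  "decode_state c = (decode_stack (nfst c), decode_int (nfst (nsnd c)), decode_int (nsnd (nsnd c)))"

definition int_add_code :: "nat \<Rightarrow> nat \<Rightarrow> nat" where
  "int_add_code a b = npair (nfst a + nfst b) (nsnd a + nsnd b)"

definition int_diff_code :: "nat \<Rightarrow> nat \<Rightarrow> nat" where
  "int_diff_code a b = npair (nfst a + nsnd b) (nsnd a + nfst b)"

definition int_scale_code :: "nat \<Rightarrow> nat \<Rightarrow> nat \<Rightarrow> nat" where
  "int_scale_code mp mn a = npair (mp * nfst a + mn * nsnd a) (mp * nsnd a + mn * nfst a)"

lemma decode_int_npair [simp]: "decode_int (npair a b) = int a - int b"
  by (simp add: decode_int_def)

lemma decode_int_add_code [simp]: "decode_int (int_add_code a b) = decode_int a + decode_int b"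
  by (simp add: decode_int_def int_add_code_def)

lemma decode_int_diff_code [simp]: "decode_int (int_diff_code a b) = decode_int a - decode_int b"
  by (simp add: decode_int_def int_diff_code_def)

lemma decode_int_scale_code [simp]: "decode_int (int_scale_code mp mn a) = (int mp - int mn) * decode_int a"
  by (simp add: decode_int_def int_scale_code_def algebra_simps)

lemma decode_int_eq_0_iff: "decode_int a = 0 \<longleftrightarrow> nfst a = nsnd a"
  by (simp add: decode_int_def)

definition coeff_pos :: "nat \<Rightarrow> (nat \<Rightarrow> int) \<Rightarrow> nat \<Rightarrow> nat" where
  "coeff_pos K n g = (if g < K then nat (n (g - 1)) else 0)"

definition coeff_neg :: "nat \<Rightarrow> (nat \<Rightarrow> int) \<Rightarrow> nat \<Rightarrow> nat" where
  "coeff_neg K n g = (if g < K then nat (- n (g - 1)) else 0)"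

lemma coeff_pos_minus_coeff_neg: "g < K \<Longrightarrow> int (coeff_pos K n g) - int (coeff_neg K n g) = n (g - 1)"
  by (simp add: coeff_pos_def coeff_neg_def)

definition act_code :: "nat \<Rightarrow> (nat \<Rightarrow> int) \<Rightarrow> nat \<Rightarrow> nat \<Rightarrow> nat" where
  "act_code K n l c =
     (if nfst l = 0 then
        npair (nfst c) (npair (int_add_code (nfst (nsnd c)) (if nsnd l = 1 then npair 0 1 else npair 1 0)) (nsnd (nsnd c)))
      else if nfst l = 1 then
        npair (nfst c) (npair (nfst (nsnd c)) (int_add_code (nsnd (nsnd c)) (if nsnd l = 1 then npair 0 1 else npair 1 0)))
      else
        let nq = int_scale_code (coeff_pos K n (nfst l)) (coeff_neg K n (nfst l)) (nsnd (nsnd c));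
            d = (if nsnd l = 1 then npair 0 0 else nq);
            r = (if nsnd l = 1 then int_diff_code (nfst (nsnd c)) nq else nfst (nsnd c));
            top = nfst (nfst c - 1)
        in if nfst c \<noteq> 0 \<and> nfst (nsnd top) = nfst l \<and> (nsnd (nsnd top) = 1 \<longleftrightarrow> nsnd l \<noteq> 1) \<and> nfst r = nsnd r
           then npair (nsnd (nfst c - 1)) (npair (int_add_code (nfst top) d) (nsnd (nsnd c)))
           else npair (Suc (npair (npair r l) (nfst c))) (npair d (nsnd (nsnd c))))"

text \<open>A configuration \<open>\<langle>w, \<langle>ok, N\<rangle>\<rangle>\<close> holds the code of the unread input, a flag
  cleared on reading a letter outside the alphabet, and the code of the current state.\<close>

definition step_code :: "nat \<Rightarrow> (nat \<Rightarrow> int) \<Rightarrow> nat \<Rightarrow> nat" where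
  "step_code K n m =
     (if nfst m = 0 then m
      else npair (nsnd (nfst m - 1))
        (npair (if nfst (nfst (nfst m - 1)) < K \<and> nsnd (nfst (nfst m - 1)) \<le> 1 then nfst (nsnd m) else 0)
          (act_code K n (nfst (nfst m - 1)) (nsnd (nsnd m)))))"

definition init_code :: "nat \<Rightarrow> nat" where
  "init_code x = npair x (npair 1 (npair 0 (npair (npair 0 0) (npair 0 0))))"

definition accept_code :: "nat \<Rightarrow> nat" where
  "accept_code m =
     (if nfst (nsnd m) = 1 \<and> nfst (nsnd (nsnd m)) = 0
         \<and> nfst (nfst (nsnd (nsnd (nsnd m)))) = nsnd (nfst (nsnd (nsnd (nsnd m))))
         \<and> nfst (nsnd (nsnd (nsnd (nsnd m)))) = nsnd (nsnd (nsnd (nsnd (nsnd m))))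
      then 1 else 0)"

text \<open>The list coded by \<open>x\<close> has at most \<open>x\<close> entries, so \<open>x\<close> steps consume it.\<close>

definition decide_code :: "nat \<Rightarrow> (nat \<Rightarrow> int) \<Rightarrow> nat \<Rightarrow> nat" where
  "decide_code K n x = accept_code ((step_code K n ^^ x) (init_code x))"

lemma computable_coeff_pos: "computable m f \<Longrightarrow> computable m (\<lambda>xs. coeff_pos K n (f xs))"
  unfolding coeff_pos_def by (rule computable_table)

lemma computable_coeff_neg: "computable m f \<Longrightarrow> computable m (\<lambda>xs. coeff_neg K n (f xs))"
  unfolding coeff_neg_def by (rule computable_table)

lemmas computable_intros =
  computable_if computable_pred_conj computable_pred_not computable_pred_iff computable_pred_eq
  computable_pred_less computable_pred_le computable_add computable_diff computable_mult
  computable_prod_encode computable_fst_prod_decode computable_snd_prod_decode computable_Suc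
  computable_const computable_hd computable_coeff_pos computable_coeff_neg

lemma computable_act_code:
  "computable m f \<Longrightarrow> computable m g \<Longrightarrow> computable m (\<lambda>xs. act_code K n (f xs) (g xs))"
  unfolding act_code_def Let_def int_add_code_def int_diff_code_def int_scale_code_def
  by (intro computable_intros; assumption?)

lemma computable_decide_code: "computable 1 (\<lambda>xs. decide_code K n (hd xs))"
proof -
  have step: "computable 1 (\<lambda>xs. step_code K n (hd xs))"
    unfolding step_code_def by (intro computable_intros computable_act_code)
  have init: "computable 1 (\<lambda>xs. init_code (hd xs))"
    unfolding init_code_def by (intro computable_intros)
  have accept: "computable 1 (\<lambda>xs. accept_code (hd xs))"
    unfolding accept_code_def by (intro computable_intros)
  show ?thesis
    unfolding decide_code_def by (rule computable_unary[OF accept computable_funpow[OF step init]])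
qed

lemma decode_stack_0 [simp]: "decode_stack 0 = []"
  by (simp add: decode_stack_def)

lemma decode_stack_Suc:
  "decode_stack (Suc c) = (decode_int (nfst (nfst c)), decode_letter (nsnd (nfst c))) # decode_stack (nsnd c)"
  by (simp add: decode_stack_def split: prod.splits)

lemma decode_stack_eq_Nil_iff: "decode_stack c = [] \<longleftrightarrow> c = 0"
  by (cases c) (auto simp: decode_stack_Suc)

lemma decode_state_act_code:
  assumes "nfst l < K"
  shows "decode_state (act_code K n l c) = act_letter n (decode_letter l) (decode_state c)"
proof -
  consider "nfst l = 0" | "nfst l = 1" | "nfst l \<ge> 2"
    by linarith
  then show ?thesis
  proof cases
    case 3
    define g e where "g = nfst l" and "e = (nsnd l = 1)"
    define nq where "nq = int_scale_code (coeff_pos K n g) (coeff_neg K n g) (nsnd (nsnd c))"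
    define d where "d = (if e then npair 0 0 else nq)"
    define r where "r = (if e then int_diff_code (nfst (nsnd c)) nq else nfst (nsnd c))"
    have l: "decode_letter l = (g, e)"
      by (simp add: decode_letter_def g_def e_def)
    have nq: "decode_int nq = n (g - 1) * decode_int (nsnd (nsnd c))"
      using coeff_pos_minus_coeff_neg[of g K n] assms by (simp add: nq_def g_def)
    have act_code: "act_code K n l c =
        (if nfst c \<noteq> 0 \<and> nfst (nsnd (nfst (nfst c - 1))) = g
            \<and> (nsnd (nsnd (nfst (nfst c - 1))) = 1 \<longleftrightarrow> \<not> e) \<and> nfst r = nsnd r
         then npair (nsnd (nfst c - 1)) (npair (int_add_code (nfst (nfst (nfst c - 1))) d) (nsnd (nsnd c)))
         else npair (Suc (npair (npair r l) (nfst c))) (npair d (nsnd (nsnd c))))"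
      using 3 unfolding act_code_def nq_def d_def r_def g_def e_def Let_def by simp
    have act_letter: "act_letter n (decode_letter l) (decode_state c) =
        (case push_stable (decode_stack (nfst c)) (decode_int r) (decode_int d) (g, e) of
           (L', p') \<Rightarrow> (L', p', decode_int (nsnd (nsnd c))))"
      using 3 unfolding l by (simp add: act_letter_def decode_state_def d_def r_def nq g_def)
    show ?thesis
      unfolding act_code act_letter
      by (cases "nfst c")
        (auto simp: push_stable_def decode_state_def decode_stack_Suc decode_letter_def l inv_letter_def
          decode_int_eq_0_iff g_def e_def)
  qed (simp_all add: act_code_def act_letter_def decode_state_def decode_letter_def)
qed

definition valid_letter_code :: "nat \<Rightarrow> nat \<Rightarrow> bool" where
  "valid_letter_code K c \<longleftrightarrow> nfst c < K \<and> nsnd c \<le> 1"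

lemma step_code_run:
  "\<exists>c'. (step_code K n ^^ length ls) (npair (list_encode ls) (npair ok c)) =
          npair 0 (npair (if \<forall>l\<in>set ls. valid_letter_code K l then ok else 0) c')
     \<and> ((\<forall>l\<in>set ls. valid_letter_code K l) \<longrightarrow> decode_state c' = act_word n (map decode_letter ls) (decode_state c))"
proof (induction ls arbitrary: ok c)
  case (Cons l ls)
  let ?ok = "if valid_letter_code K l then ok else 0"
  have first: "step_code K n (npair (list_encode (l # ls)) (npair ok c)) =
      npair (list_encode ls) (npair ?ok (act_code K n l c))"
    by (simp add: step_code_def valid_letter_code_def)
  obtain c' where c': "(step_code K n ^^ length ls) (npair (list_encode ls) (npair ?ok (act_code K n l c))) =
        npair 0 (npair (if \<forall>l\<in>set ls. valid_letter_code K l then ?ok else 0) c')"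
      "(\<forall>l\<in>set ls. valid_letter_code K l) \<longrightarrow>
        decode_state c' = act_word n (map decode_letter ls) (decode_state (act_code K n l c))"
    using Cons.IH by blast
  show ?case
  proof (intro exI conjI)
    show "(step_code K n ^^ length (l # ls)) (npair (list_encode (l # ls)) (npair ok c)) =
        npair 0 (npair (if \<forall>l\<in>set (l # ls). valid_letter_code K l then ok else 0) c')"
      using c'(1) first by (simp add: funpow_Suc_right del: funpow.simps)
    show "(\<forall>l\<in>set (l # ls). valid_letter_code K l) \<longrightarrow>
        decode_state c' = act_word n (map decode_letter (l # ls)) (decode_state c)"
      using c'(2) decode_state_act_code[of l K n c] by (simp add: valid_letter_code_def)
  qed
qed simp

lemma step_code_halted: "nfst m = 0 \<Longrightarrow> (step_code K n ^^ j) m = m"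
  by (induction j) (auto simp: step_code_def)

lemma length_list_decode_le: "length (list_decode x) \<le> x"
proof -
  have "length ls \<le> list_encode ls" for ls
    by (induction ls) (auto, metis le_prod_encode_2 le_trans)
  from this[of "list_decode x"] show ?thesis
    by simp
qed

lemma decide_code_eq:
  "decide_code K n x =
     (if (\<forall>l\<in>set (list_decode x). valid_letter_code K l)
         \<and> act_word n (map decode_letter (list_decode x)) ([], 0, 0) = ([], 0, 0)
      then 1 else 0)"
proof -
  let ?ls = "list_decode x" and ?valid = "\<forall>l\<in>set (list_decode x). valid_letter_code K l"
  have empty: "decode_state (npair 0 (npair (npair 0 0) (npair 0 0))) = ([], 0, 0)"
    by (simp add: decode_state_def)
  obtain c' where c': "(step_code K n ^^ length ?ls) (init_code x) = npair 0 (npair (if ?valid then 1 else 0) c')"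
      "?valid \<longrightarrow> decode_state c' = act_word n (map decode_letter ?ls) ([], 0, 0)"
    using step_code_run[where K = K and n = n and ls = ?ls and ok = 1 and c = "npair 0 (npair (npair 0 0) (npair 0 0))"]
    unfolding init_code_def empty by auto
  have "(step_code K n ^^ x) (init_code x) = (step_code K n ^^ (x - length ?ls)) ((step_code K n ^^ length ?ls) (init_code x))"
    using length_list_decode_le[of x] by (metis funpow_add le_add_diff_inverse2 o_apply)
  also have "\<dots> = npair 0 (npair (if ?valid then 1 else 0) c')"
    using c'(1) by (simp add: step_code_halted)
  finally have run: "(step_code K n ^^ x) (init_code x) = npair 0 (npair (if ?valid then 1 else 0) c')" .
  have "decode_state c' = ([], 0, 0) \<longleftrightarrow>
      nfst c' = 0 \<and> nfst (nfst (nsnd c')) = nsnd (nfst (nsnd c')) \<and> nfst (nsnd (nsnd c')) = nsnd (nsnd (nsnd c'))"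
    by (simp add: decode_state_def decode_stack_eq_Nil_iff decode_int_eq_0_iff)
  then show ?thesis
    unfolding decide_code_def run using c'(2) by (auto simp: accept_code_def)
qed

lemma encode_word_eq: "encode_word w = list_encode (map (\<lambda>(g, e). npair g (if e then 1 else 0)) w)"
  by (simp add: encode_word_def)

lemma mem_trivial_words_iff:
  "x \<in> encode_word ` {w. (\<forall>l\<in>set w. fst l < k + 2) \<and> pres_eq (G_relators k n) w []} \<longleftrightarrow>
   (\<forall>l\<in>set (list_decode x). valid_letter_code (k + 2) l)
     \<and> act_word n (map decode_letter (list_decode x)) ([], 0, 0) = ([], 0, 0)"
proof -
  let ?enc = "\<lambda>(g, e). npair g (if e then 1 else 0)"
  have dec_enc: "decode_letter (?enc l) = l" for l
    by (cases l) (simp add: decode_letter_def)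
  have enc_dec: "?enc (decode_letter c) = c" if "nsnd c \<le> 1" for c
  proof -
    have "(if nsnd c = 1 then 1 else 0) = nsnd c"
      using that by auto
    then show ?thesis
      by (simp add: decode_letter_def)
  qed
  have valid_enc: "valid_letter_code K (?enc l) \<longleftrightarrow> fst l < K" for K l
    by (cases l) (simp add: valid_letter_code_def)
  show ?thesis
  proof
    assume "x \<in> encode_word ` {w. (\<forall>l\<in>set w. fst l < k + 2) \<and> pres_eq (G_relators k n) w []}"
    then obtain w where w: "x = encode_word w" "\<forall>l\<in>set w. fst l < k + 2" "pres_eq (G_relators k n) w []"
      by blast
    have "list_decode x = map ?enc w"
      using w(1) by (simp add: encode_word_eq)
    moreover have "map decode_letter (map ?enc w) = w"
      by (simp add: dec_enc map_idI)
    ultimately show "(\<forall>l\<in>set (list_decode x). valid_letter_code (k + 2) l)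
        \<and> act_word n (map decode_letter (list_decode x)) ([], 0, 0) = ([], 0, 0)"
      using w(2,3) G_eq_Nil_iff_act_word[OF w(2)] by (auto simp: valid_enc)
  next
    assume x: "(\<forall>l\<in>set (list_decode x). valid_letter_code (k + 2) l)
        \<and> act_word n (map decode_letter (list_decode x)) ([], 0, 0) = ([], 0, 0)"
    define w where "w = map decode_letter (list_decode x)"
    have "map ?enc w = list_decode x"
      unfolding w_def using x by (simp add: map_idI enc_dec valid_letter_code_def)
    then have "x = encode_word w"
      by (simp add: encode_word_eq)
    moreover have lt: "\<forall>l\<in>set w. fst l < k + 2"
      using x unfolding w_def by (auto simp: valid_letter_code_def decode_letter_def)
    moreover have "pres_eq (G_relators k n) w []"
      using G_eq_Nil_iff_act_word[OF lt] x unfolding w_def by simp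
    ultimately show "x \<in> encode_word ` {w. (\<forall>l\<in>set w. fst l < k + 2) \<and> pres_eq (G_relators k n) w []}"
      by blast
  qed
qed

theorem mainTheorem3:
  fixes k :: nat and n :: "nat \<Rightarrow> int"
  assumes "k \<ge> 1"
  shows "word_problem_solvable (k + 2) (G_relators k n)"
proof -
  obtain c where c: "\<And>xs. length xs = 1 \<Longrightarrow> eval c xs (decide_code (k + 2) n (hd xs))"
    using computable_decide_code[of "k + 2" n] unfolding computable_def by blast
  have "eval c [x] (if x \<in> encode_word ` {w. (\<forall>l\<in>set w. fst l < k + 2) \<and> pres_eq (G_relators k n) w []}
      then 1 else 0)" for x
    using c[of "[x]"] unfolding mem_trivial_words_iff decide_code_eq by simp
  then show ?thesis
    unfolding word_problem_solvable_def decidable_set_def by blast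
qed

end
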